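(* Let $f:2^{\mathcal N}\to\mathbb R_{\ge0}$ be non-negative submodular, and let $\mathcal N$ be partitioned into non-empty parts $P_1,\dots,P_k$, each containing a dummy element $d_j\in P_j$ with $f(S)=f(S\setminus\{d_1,\dots,d_k\})$ for all $S$. Consider the Smooth Residual Random Greedy algorithm with parameter $T$: $S_0=\emptyset$; for $i=1,\dots,T$, set $S_i=S_{i-1}$, let $M_i$ consist of, for each $j\in I(S_{i-1})$, one element of $P_j$ maximizing $f(S_{i-1}\cup\{u\})-f(S_{i-1})$ over $u\in P_j$; pick $j$ uniformly at random from $\{1,\dots,k\}$ and, if $j\in I(S_{i-1})$, let $u_i$ be the element of $M_i$ in $P_j$ and set $S_i=S_{i-1}\cup\{u_i\}$. Then for every $i=1,\dots,T$, $$\mathbb E[f(O_{S_i}\cup S_i)]\ge\Big(1-\frac2k\Big)\mathbb E[f(O_{S_{i-1}}\cup S_{i-1})]+\frac1k\,\mathbb E[f(S_{i-1})].$$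
   Context: A set function $f$ is submodular if $f(A\cup B)+f(A\cap B)\le f(A)+f(B)$ for all $A,B\subseteq\mathcal N$. The partition matroid has independent sets $\mathcal I=\{S\subseteq\mathcal N: |S\cap P_j|\le1\ \forall j\}$. For $S\subseteq\mathcal N$, $I(S)=\{j: P_j\cap S=\emptyset\}$. For $S\in\mathcal I$, $O_S$ denotes a fixed set $A\subseteq\mathcal N\setminus S$ maximizing $f(S\cup A)$ subject to $S\cup A\in\mathcal I$, chosen (possible thanks to the dummy elements) with $|O_S|=k-|S|$, i.e., containing exactly one element from each part $P_j$, $j\in I(S)$. *)

theory Defs
  imports "HOL-Probability.Probability"
begin

text \<open>Parts are indexed by 1..k; P j is the j-th part.\<close>

definition submodular_on :: "'a set \<Rightarrow> ('a set \<Rightarrow> real) \<Rightarrow> bool" where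
  "submodular_on N f \<longleftrightarrow>
     (\<forall>A B. A \<subseteq> N \<longrightarrow> B \<subseteq> N \<longrightarrow> f (A \<union> B) + f (A \<inter> B) \<le> f A + f B)"

definition pm_indep :: "nat \<Rightarrow> (nat \<Rightarrow> 'a set) \<Rightarrow> 'a set \<Rightarrow> bool" where
  "pm_indep k P S \<longleftrightarrow> S \<subseteq> (\<Union>j\<in>{1..k}. P j) \<and> (\<forall>j\<in>{1..k}. card (S \<inter> P j) \<le> 1)"

definition free_parts :: "nat \<Rightarrow> (nat \<Rightarrow> 'a set) \<Rightarrow> 'a set \<Rightarrow> nat set" where
  "free_parts k P S = {j \<in> {1..k}. P j \<inter> S = {}}"

text \<open>Distribution of S_i in Smooth Residual Random Greedy. m i S j is the element of M_i
  lying in part P j when the current solution is S (tie-breaking rule).\<close>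
fun srrg :: "nat \<Rightarrow> (nat \<Rightarrow> 'a set) \<Rightarrow> (nat \<Rightarrow> 'a set \<Rightarrow> nat \<Rightarrow> 'a) \<Rightarrow> nat \<Rightarrow> 'a set pmf" where
  "srrg k P m 0 = return_pmf {}"
| "srrg k P m (Suc i) =
     bind_pmf (srrg k P m i)
       (\<lambda>S. map_pmf (\<lambda>j. if j \<in> free_parts k P S then insert (m (Suc i) S j) S else S)
              (pmf_of_set {1..k}))"

end

theory Submission
  imports Defs
begin

text \<open>
  For independent \<open>S\<close> let \<open>Y = O\<^sub>S \<union> S\<close>. It is a basis, so every part \<open>P\<^sub>j\<close> with \<open>j \<in> I(S)\<close>
  meets it in a single element \<open>o\<^sub>j \<in> O\<^sub>S\<close>, and these elements exhaust \<open>O\<^sub>S\<close>. When such a part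
  is drawn and \<open>u\<^sub>j \<in> P\<^sub>j\<close> is added, \<open>O\<^sub>S - o\<^sub>j\<close> is a feasible completion of \<open>S + u\<^sub>j\<close>, so by
  submodularity \<open>f(O\<^bsub>S+u\<^sub>j\<^esub> \<union> S + u\<^sub>j) \<ge> f(Y) + [f(Y + u\<^sub>j) - f(Y)] - [f(Y) - f(Y - o\<^sub>j)]\<close>
  (when \<open>u\<^sub>j = o\<^sub>j\<close> this follows instead from \<open>f(Y - o\<^sub>j) \<le> f(Y)\<close>, by optimality of \<open>O\<^sub>S\<close>).
  Summed over \<open>I(S)\<close>, the gains add up to at least \<open>f(Y \<union> {u\<^sub>j}) - f(Y) \<ge> -f(Y)\<close> and the losses
  to at most \<open>f(Y) - f(S)\<close>, while the other \<open>k - |I(S)|\<close> draws leave \<open>S\<close> unchanged. Averaging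
  over the \<open>k\<close> draws gives the inequality for every outcome of the previous round, hence in
  expectation.
\<close>

lemma expectation_bind_pmf_finite:
  fixes F :: "'b \<Rightarrow> real"
  assumes finM: "finite (set_pmf M)" and finK: "\<And>x. x \<in> set_pmf M \<Longrightarrow> finite (set_pmf (K x))"
  shows "measure_pmf.expectation (bind_pmf M K) F
       = measure_pmf.expectation M (\<lambda>x. measure_pmf.expectation (K x) F)"
proof -
  define A where "A = set_pmf (bind_pmf M K)"
  have A: "finite A" using finM finK unfolding A_def by simp
  have "measure_pmf.expectation (bind_pmf M K) F = (\<Sum>a\<in>A. F a * pmf (bind_pmf M K) a)"
    by (rule integral_measure_pmf_real[OF A]) (simp add: A_def)
  also have "\<dots> = (\<Sum>a\<in>A. measure_pmf.expectation M (\<lambda>x. F a * pmf (K x) a))"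
    by (simp add: pmf_bind)
  also have "\<dots> = measure_pmf.expectation M (\<lambda>x. \<Sum>a\<in>A. F a * pmf (K x) a)"
    by (simp add: integrable_measure_pmf_finite[OF finM])
  also have "\<dots> = measure_pmf.expectation M (\<lambda>x. measure_pmf.expectation (K x) F)"
  proof (intro integral_cong_AE)
    show "AE x in M. (\<Sum>a\<in>A. F a * pmf (K x) a) = measure_pmf.expectation (K x) F"
      unfolding AE_measure_pmf_iff
      by (intro ballI integral_measure_pmf_real[OF A, symmetric]) (auto simp: A_def)
  qed simp_all
  finally show ?thesis .
qed

lemma submodular_onD:
  "submodular_on N f \<Longrightarrow> A \<subseteq> N \<Longrightarrow> B \<subseteq> N \<Longrightarrow> f (A \<union> B) + f (A \<inter> B) \<le> f A + f B"
  unfolding submodular_on_def by blast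

lemma submodular_sum_marginal_gains_ge:
  assumes submod: "submodular_on N f" and "finite U" "U \<subseteq> N" and YN: "Y \<subseteq> N"
  shows "f (Y \<union> U) - f Y \<le> (\<Sum>u\<in>U. f (insert u Y) - f Y)"
  using \<open>finite U\<close> \<open>U \<subseteq> N\<close>
proof (induction U rule: finite_induct)
  case (insert u U)
  have "f (insert u (Y \<union> U)) - f (Y \<union> U) \<le> f (insert u Y) - f Y"
  proof (cases "u \<in> Y")
    case False
    have "insert u Y \<union> (Y \<union> U) = insert u (Y \<union> U)" "insert u Y \<inter> (Y \<union> U) = Y"
      using False insert.hyps(2) by auto
    then show ?thesis
      using submodular_onD[OF submod, of "insert u Y" "Y \<union> U"] insert.prems YN by auto
  qed (simp add: insert_absorb)
  then show ?case using insert by simp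
qed simp

lemma submodular_sum_marginal_losses_le:
  assumes submod: "submodular_on N f" and "finite W" "W \<subseteq> Y" and YN: "Y \<subseteq> N"
  shows "(\<Sum>w\<in>W. f Y - f (Y - {w})) \<le> f Y - f (Y - W)"
  using \<open>finite W\<close> \<open>W \<subseteq> Y\<close>
proof (induction W rule: finite_induct)
  case (insert w W)
  have "(Y - {w}) \<union> (Y - W) = Y" "(Y - {w}) \<inter> (Y - W) = Y - insert w W"
    using insert by auto
  moreover have "Y - {w} \<subseteq> N" "Y - W \<subseteq> N" using YN by auto
  ultimately have "f Y - f (Y - {w}) \<le> f (Y - W) - f (Y - insert w W)"
    using submodular_onD[OF submod, of "Y - {w}" "Y - W"] by simp
  then show ?case using insert by simp
qed simp

lemma submodular_exchange:
  assumes "submodular_on N f" "Y \<subseteq> N" "u \<in> N" "u \<notin> Y"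
  shows "f (insert u Y) + f (Y - {w}) \<le> f (insert u (Y - {w})) + f Y"
proof -
  have "insert u (Y - {w}) \<union> Y = insert u Y" "insert u (Y - {w}) \<inter> Y = Y - {w}"
    using \<open>u \<notin> Y\<close> by auto
  then show ?thesis
    using submodular_onD[OF assms(1), of "insert u (Y - {w})" Y] assms(2,3) by auto
qed

locale partition_matroid =
  fixes N :: "'a set" and k :: nat and P :: "nat \<Rightarrow> 'a set"
  assumes finite_ground: "finite N"
    and parts_cover: "(\<Union>j\<in>{1..k}. P j) = N"
    and parts_disjoint: "\<And>i j. i \<in> {1..k} \<Longrightarrow> j \<in> {1..k} \<Longrightarrow> i \<noteq> j \<Longrightarrow> P i \<inter> P j = {}"
begin

lemma indep_subset_ground: "pm_indep k P S \<Longrightarrow> S \<subseteq> N"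
  using parts_cover unfolding pm_indep_def by blast

lemma finite_indep: "pm_indep k P S \<Longrightarrow> finite S"
  using indep_subset_ground finite_ground finite_subset by blast

lemma indep_subset:
  assumes "pm_indep k P X" "Z \<subseteq> X"
  shows "pm_indep k P Z"
proof -
  have "card (Z \<inter> P j) \<le> card (X \<inter> P j)" for j
    using assms finite_indep by (intro card_mono) auto
  then show ?thesis using assms unfolding pm_indep_def by (meson order_trans subset_trans)
qed

lemma indep_insert_free:
  assumes S: "pm_indep k P S" and j: "j \<in> free_parts k P S" and u: "u \<in> P j"
  shows "pm_indep k P (insert u S)"
proof -
  have j_part: "j \<in> {1..k}" "P j \<inter> S = {}" using j unfolding free_parts_def by auto
  have "card (insert u S \<inter> P l) \<le> 1" if l: "l \<in> {1..k}" for l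
  proof (cases "l = j")
    case True
    then have "insert u S \<inter> P l = {u}" using j_part u by auto
    then show ?thesis by simp
  next
    case False
    then have "insert u S \<inter> P l = S \<inter> P l" using parts_disjoint[OF j_part(1) l] u by auto
    then show ?thesis using S l unfolding pm_indep_def by simp
  qed
  moreover have "u \<in> (\<Union>j\<in>{1..k}. P j)" using j_part u by auto
  ultimately show ?thesis using S unfolding pm_indep_def by simp
qed

lemma card_eq_sum_parts:
  assumes "X \<subseteq> N"
  shows "card X = (\<Sum>j\<in>{1..k}. card (X \<inter> P j))"
proof -
  have "X = (\<Union>j\<in>{1..k}. X \<inter> P j)" using assms parts_cover by auto
  also have "card \<dots> = (\<Sum>j\<in>{1..k}. card (X \<inter> P j))"
  proof (rule card_UN_disjoint)
    show "\<forall>j\<in>{1..k}. finite (X \<inter> P j)" using assms finite_ground finite_subset by blast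
    show "\<forall>i\<in>{1..k}. \<forall>j\<in>{1..k}. i \<noteq> j \<longrightarrow> X \<inter> P i \<inter> (X \<inter> P j) = {}"
      using parts_disjoint by blast
  qed simp
  finally show ?thesis .
qed

lemma card_indep_le:
  assumes "pm_indep k P S"
  shows "card S \<le> k"
proof -
  have "card S = (\<Sum>j\<in>{1..k}. card (S \<inter> P j))"
    using card_eq_sum_parts indep_subset_ground assms by blast
  also have "\<dots> \<le> (\<Sum>j\<in>{1..k}. 1)"
    using assms unfolding pm_indep_def by (intro sum_mono) auto
  finally show ?thesis by simp
qed

lemma basis_inter_part_singleton:
  assumes Y: "pm_indep k P Y" and card_Y: "card Y = k" and j: "j \<in> {1..k}"
  shows "\<exists>y. Y \<inter> P j = {y}"
proof -
  have "card (Y \<inter> P j) = 1"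
  proof (rule ccontr)
    assume "card (Y \<inter> P j) \<noteq> 1"
    then have "card (Y \<inter> P j) < 1" using Y j unfolding pm_indep_def by fastforce
    moreover have "\<forall>l\<in>{1..k}. card (Y \<inter> P l) \<le> 1" using Y unfolding pm_indep_def by blast
    ultimately have "(\<Sum>l\<in>{1..k}. card (Y \<inter> P l)) < (\<Sum>l\<in>{1..k}. 1)"
      using j by (intro sum_strict_mono_ex1) auto
    then show False using card_eq_sum_parts[OF indep_subset_ground[OF Y]] card_Y by simp
  qed
  then show ?thesis by (simp add: card_1_singleton_iff)
qed

lemma srrg_indep:
  assumes m: "\<And>i S j. pm_indep k P S \<Longrightarrow> j \<in> free_parts k P S \<Longrightarrow> m i S j \<in> P j"
  shows "S \<in> set_pmf (srrg k P m n) \<Longrightarrow> pm_indep k P S"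
proof (induction n arbitrary: S)
  case 0
  then show ?case by (simp add: pm_indep_def)
next
  case (Suc n)
  from Suc.prems obtain S\<^sub>0 j where S\<^sub>0: "S\<^sub>0 \<in> set_pmf (srrg k P m n)"
    and S: "S = (if j \<in> free_parts k P S\<^sub>0 then insert (m (Suc n) S\<^sub>0 j) S\<^sub>0 else S\<^sub>0)"
    unfolding srrg.simps set_bind_pmf set_map_pmf by blast
  have indep_S\<^sub>0: "pm_indep k P S\<^sub>0" by (rule Suc.IH[OF S\<^sub>0])
  show ?case
  proof (cases "j \<in> free_parts k P S\<^sub>0")
    case True
    then show ?thesis
      using S indep_insert_free[OF indep_S\<^sub>0 True m[OF indep_S\<^sub>0 True]] by simp
  qed (use S indep_S\<^sub>0 in simp)
qed

lemma finite_set_pmf_srrg: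
  assumes "\<And>i S j. pm_indep k P S \<Longrightarrow> j \<in> free_parts k P S \<Longrightarrow> m i S j \<in> P j"
  shows "finite (set_pmf (srrg k P m n))"
proof (rule finite_subset)
  show "set_pmf (srrg k P m n) \<subseteq> Pow N"
    using srrg_indep[where m=m, OF assms] indep_subset_ground by blast
qed (simp add: finite_ground)

end

locale srrg_setting = partition_matroid N k P
  for N :: "'a set" and k :: nat and P :: "nat \<Rightarrow> 'a set" +
  fixes f :: "'a set \<Rightarrow> real" and Opt :: "'a set \<Rightarrow> 'a set"
  assumes nonneg: "\<And>S. S \<subseteq> N \<Longrightarrow> 0 \<le> f S"
    and submodular: "submodular_on N f"
    and Opt_subset: "\<And>S. pm_indep k P S \<Longrightarrow> Opt S \<subseteq> N - S"
    and Opt_indep: "\<And>S. pm_indep k P S \<Longrightarrow> pm_indep k P (S \<union> Opt S)"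
    and card_Opt: "\<And>S. pm_indep k P S \<Longrightarrow> card (Opt S) = k - card S"
    and Opt_optimal: "\<And>S A. pm_indep k P S \<Longrightarrow> A \<subseteq> N - S \<Longrightarrow> pm_indep k P (S \<union> A) \<Longrightarrow>
                        f (S \<union> A) \<le> f (S \<union> Opt S)"
begin

definition completion :: "'a set \<Rightarrow> 'a set" where
  "completion S = Opt S \<union> S"

lemma completion_indep: "pm_indep k P S \<Longrightarrow> pm_indep k P (completion S)"
  unfolding completion_def using Opt_indep by (simp add: Un_commute)

lemma completion_subset_ground: "pm_indep k P S \<Longrightarrow> completion S \<subseteq> N"
  using completion_indep indep_subset_ground by blast

lemma card_completion:
  assumes S: "pm_indep k P S"
  shows "card (completion S) = k"
proof -
  have "card (completion S) = card (Opt S) + card S"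
    unfolding completion_def using Opt_subset[OF S] finite_indep[OF S] finite_ground
    by (intro card_Un_disjoint) (auto intro: finite_subset)
  then show ?thesis using card_Opt[OF S] card_indep_le[OF S] by simp
qed

lemma Opt_inter_free_part:
  assumes S: "pm_indep k P S" and j: "j \<in> free_parts k P S"
  shows "\<exists>w. Opt S \<inter> P j = {w}"
proof -
  have j_part: "j \<in> {1..k}" "P j \<inter> S = {}" using j unfolding free_parts_def by auto
  moreover obtain y where "completion S \<inter> P j = {y}"
    using basis_inter_part_singleton[OF completion_indep[OF S] card_completion[OF S] j_part(1)]
    by blast
  ultimately show ?thesis unfolding completion_def by auto
qed

lemma completion_insert_ge:
  assumes S: "pm_indep k P S" and j: "j \<in> free_parts k P S" and u: "u \<in> P j"
    and w: "Opt S \<inter> P j = {w}"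
  shows "f (insert u (completion S)) + f (completion S - {w}) - f (completion S)
           \<le> f (completion (insert u S))"
proof -
  define Y where "Y = completion S"
  have j_part: "j \<in> {1..k}" "P j \<inter> S = {}" using j unfolding free_parts_def by auto
  have Y_part: "Y \<inter> P j = {w}" using w j_part unfolding Y_def completion_def by auto
  have w_notin_S: "w \<notin> S" using w j_part by auto
  have Opt_minus_w: "Opt S - {w} \<subseteq> N - S" using Opt_subset[OF S] by auto
  have exchange_feasible: "f (insert u (Y - {w})) \<le> f (completion (insert u S))"
  proof -
    have Yw_indep: "pm_indep k P (Y - {w})"
      using indep_subset[OF completion_indep[OF S]] unfolding Y_def by blast
    have union_eq: "insert u S \<union> (Opt S - {w}) = insert u (Y - {w})"
      unfolding Y_def completion_def using w_notin_S by auto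
    have "j \<in> free_parts k P (Y - {w})" using Y_part j_part unfolding free_parts_def by auto
    then have "pm_indep k P (insert u S \<union> (Opt S - {w}))"
      unfolding union_eq by (rule indep_insert_free[OF Yw_indep _ u])
    moreover have "Opt S - {w} \<subseteq> N - insert u S" using Opt_minus_w u w by auto
    moreover note union_eq
    ultimately show ?thesis
      using Opt_optimal[OF indep_insert_free[OF S j u], of "Opt S - {w}"]
      unfolding completion_def by (simp add: Un_commute)
  qed
  show ?thesis
  proof (cases "u \<in> Y")
    case True
    then have "u = w" using Y_part u by auto
    have "S \<union> (Opt S - {w}) = Y - {w}" "S \<union> Opt S = Y"
      using w_notin_S unfolding Y_def completion_def by auto
    moreover have "pm_indep k P (S \<union> (Opt S - {w}))"
      by (rule indep_subset[OF Opt_indep[OF S]]) auto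
    ultimately have "f (Y - {w}) \<le> f Y" using Opt_optimal[OF S Opt_minus_w] by simp
    moreover have "insert u (Y - {w}) = Y" "insert u Y = Y" using True \<open>u = w\<close> by auto
    ultimately show ?thesis using exchange_feasible unfolding Y_def by simp
  next
    case False
    have "u \<in> N" using u j_part parts_cover by auto
    then show ?thesis
      using submodular_exchange[OF submodular completion_subset_ground[OF S], of u w]
        False exchange_feasible unfolding Y_def by linarith
  qed
qed

lemma sum_completion_insert_free_ge:
  assumes S: "pm_indep k P S" and u: "\<And>j. j \<in> free_parts k P S \<Longrightarrow> u j \<in> P j"
  shows "(real (card (free_parts k P S)) - 2) * f (completion S) + f S
           \<le> (\<Sum>j\<in>free_parts k P S. f (completion (insert (u j) S)))"
proof -
  define I where "I = free_parts k P S"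
  define Y where "Y = completion S"
  have I_parts: "I \<subseteq> {1..k}" unfolding I_def free_parts_def by auto
  have finite_I: "finite I" using I_parts finite_subset by blast
  have u_part: "\<And>j. j \<in> I \<Longrightarrow> u j \<in> P j" using u unfolding I_def .
  have "\<forall>j\<in>I. \<exists>w. Opt S \<inter> P j = {w}" using Opt_inter_free_part[OF S] unfolding I_def by blast
  then obtain w where w: "\<And>j. j \<in> I \<Longrightarrow> Opt S \<inter> P j = {w j}" by metis
  have inj_on_parts: "inj_on v I" if "\<And>j. j \<in> I \<Longrightarrow> v j \<in> P j" for v
  proof (rule inj_onI)
    fix a b assume a: "a \<in> I" and b: "b \<in> I" and eq: "v a = v b"
    show "a = b"
    proof (rule ccontr)
      assume "a \<noteq> b"
      then have "P a \<inter> P b = {}" using a b I_parts by (intro parts_disjoint) auto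
      then show False using that[OF a] that[OF b] eq by auto
    qed
  qed
  have Opt_eq: "Opt S = w ` I"
  proof
    show "w ` I \<subseteq> Opt S" using w by blast
    show "Opt S \<subseteq> w ` I"
    proof
      fix x assume x: "x \<in> Opt S"
      then obtain l where l: "l \<in> {1..k}" "x \<in> P l" using Opt_subset[OF S] parts_cover by blast
      obtain y where "Y \<inter> P l = {y}"
        using basis_inter_part_singleton[OF completion_indep[OF S] card_completion[OF S] l(1)]
        unfolding Y_def by blast
      then have "Y \<inter> P l = {x}" using x l(2) unfolding Y_def completion_def by auto
      then have "P l \<inter> S = {}" using x Opt_subset[OF S] unfolding Y_def completion_def by auto
      then have "l \<in> I" using l(1) unfolding I_def free_parts_def by simp
      then show "x \<in> w ` I" using w[of l] x l(2) by auto
    qed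
  qed
  have YN: "Y \<subseteq> N" unfolding Y_def by (rule completion_subset_ground[OF S])
  have uN: "u ` I \<subseteq> N" using u_part I_parts parts_cover by blast
  have gains: "f (Y \<union> u ` I) - f Y \<le> (\<Sum>j\<in>I. f (insert (u j) Y) - f Y)"
    using submodular_sum_marginal_gains_ge[OF submodular finite_imageI[OF finite_I] uN YN]
    by (simp add: sum.reindex[OF inj_on_parts[OF u_part]])
  have w_part: "\<And>j. j \<in> I \<Longrightarrow> w j \<in> P j" using w by blast
  have "(\<Sum>j\<in>I. f Y - f (Y - {w j})) = (\<Sum>x\<in>w ` I. f Y - f (Y - {x}))"
    by (simp add: sum.reindex[OF inj_on_parts[OF w_part]])
  also have "\<dots> \<le> f Y - f (Y - w ` I)"
    by (rule submodular_sum_marginal_losses_le[OF submodular finite_imageI[OF finite_I] _ YN])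
      (use Opt_eq in \<open>auto simp: Y_def completion_def\<close>)
  also have "Y - w ` I = S" using Opt_eq Opt_subset[OF S] unfolding Y_def completion_def by auto
  finally have losses: "(\<Sum>j\<in>I. f Y - f (Y - {w j})) \<le> f Y - f S" .
  have "(\<Sum>j\<in>I. f (insert (u j) Y) + f (Y - {w j}) - f Y) \<le> (\<Sum>j\<in>I. f (completion (insert (u j) S)))"
    unfolding Y_def using completion_insert_ge[OF S] u_part w by (intro sum_mono) (simp add: I_def)
  moreover have "(\<Sum>j\<in>I. f (insert (u j) Y) + f (Y - {w j}) - f Y)
      = (\<Sum>j\<in>I. f (insert (u j) Y) - f Y) - (\<Sum>j\<in>I. f Y - f (Y - {w j})) + card I * f Y"
    by (simp add: sum.distrib sum_subtractf)
  moreover have "0 \<le> f (Y \<union> u ` I)" using nonneg YN uN by simp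
  ultimately show ?thesis
    using gains losses unfolding I_def[symmetric] Y_def[symmetric] by (simp add: left_diff_distrib)
qed

lemma sum_completion_step_ge:
  assumes S: "pm_indep k P S" and u: "\<And>j. j \<in> free_parts k P S \<Longrightarrow> u j \<in> P j"
  shows "(real k - 2) * f (completion S) + f S
    \<le> (\<Sum>j\<in>{1..k}. f (completion (if j \<in> free_parts k P S then insert (u j) S else S)))"
proof -
  let ?I = "free_parts k P S"
  have I: "?I \<subseteq> {1..k}" unfolding free_parts_def by auto
  have "(\<Sum>j\<in>{1..k}. f (completion (if j \<in> ?I then insert (u j) S else S)))
      = (\<Sum>j\<in>?I. f (completion (insert (u j) S))) + (\<Sum>j\<in>{1..k} - ?I. f (completion S))"
    using sum.subset_diff[OF I, of "\<lambda>j. f (completion (if j \<in> ?I then insert (u j) S else S))"]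
    by simp
  also have "(\<Sum>j\<in>{1..k} - ?I. f (completion S)) = (real k - card ?I) * f (completion S)"
    using I card_mono[OF _ I] by (simp add: card_Diff_subset finite_subset of_nat_diff)
  finally show ?thesis using sum_completion_insert_free_ge[OF S u] by (simp add: left_diff_distrib)
qed

lemma expectation_srrg_step_ge:
  assumes m: "\<And>i S j. pm_indep k P S \<Longrightarrow> j \<in> free_parts k P S \<Longrightarrow> m i S j \<in> P j"
    and k: "1 \<le> k"
  shows "(1 - 2 / real k) * measure_pmf.expectation (srrg k P m i) (\<lambda>S. f (completion S))
           + (1 / real k) * measure_pmf.expectation (srrg k P m i) f
         \<le> measure_pmf.expectation (srrg k P m (Suc i)) (\<lambda>S. f (completion S))"
proof -
  let ?M = "srrg k P m i" and ?F = "\<lambda>S. f (completion S)"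
  define g where "g S j = (if j \<in> free_parts k P S then insert (m (Suc i) S j) S else S)" for S j
  have finite_M: "finite (set_pmf ?M)" by (rule finite_set_pmf_srrg[where m=m, OF m])
  have "(1 - 2 / real k) * measure_pmf.expectation ?M ?F + (1 / real k) * measure_pmf.expectation ?M f
      = measure_pmf.expectation ?M (\<lambda>S. ((real k - 2) * ?F S + f S) / real k)"
    using finite_M k by (simp add: integrable_measure_pmf_finite field_simps)
  also have "\<dots> \<le> measure_pmf.expectation ?M (\<lambda>S. (\<Sum>j\<in>{1..k}. ?F (g S j)) / real k)"
  proof (rule integral_mono_AE)
    show "AE S in ?M. ((real k - 2) * ?F S + f S) / real k \<le> (\<Sum>j\<in>{1..k}. ?F (g S j)) / real k"
      unfolding AE_measure_pmf_iff
    proof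
      fix S assume "S \<in> set_pmf ?M"
      then have "pm_indep k P S" using srrg_indep[where m=m] m by blast
      then show "((real k - 2) * ?F S + f S) / real k \<le> (\<Sum>j\<in>{1..k}. ?F (g S j)) / real k"
        unfolding g_def using sum_completion_step_ge[where u="m (Suc i) S"] m
        by (simp add: divide_right_mono)
    qed
  qed (use finite_M in \<open>auto intro: integrable_measure_pmf_finite\<close>)
  also have "\<dots> = measure_pmf.expectation ?M
      (\<lambda>S. measure_pmf.expectation (map_pmf (g S) (pmf_of_set {1..k})) ?F)"
    using k by (simp add: integral_pmf_of_set)
  also have "\<dots> = measure_pmf.expectation (srrg k P m (Suc i)) ?F"
    unfolding srrg.simps g_def[abs_def] using k
    by (intro expectation_bind_pmf_finite[symmetric] finite_M) simp
  finally show ?thesis .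
qed

end

theorem lemma8:
  fixes N :: "'a set" and f :: "'a set \<Rightarrow> real" and k T i :: nat
    and P :: "nat \<Rightarrow> 'a set" and d :: "nat \<Rightarrow> 'a"
    and m :: "nat \<Rightarrow> 'a set \<Rightarrow> nat \<Rightarrow> 'a" and Opt :: "'a set \<Rightarrow> 'a set"
  assumes finN: "finite N"
    and k_pos: "k \<ge> 1"
    and nonneg: "\<forall>S. S \<subseteq> N \<longrightarrow> f S \<ge> 0"
    and submod: "submodular_on N f"
    and parts_cover: "(\<Union>j\<in>{1..k}. P j) = N"
    and parts_disj: "\<forall>j1\<in>{1..k}. \<forall>j2\<in>{1..k}. j1 \<noteq> j2 \<longrightarrow> P j1 \<inter> P j2 = {}"
    and parts_ne: "\<forall>j\<in>{1..k}. P j \<noteq> {}"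
    and dummy_in: "\<forall>j\<in>{1..k}. d j \<in> P j"
    and dummy: "\<forall>S. S \<subseteq> N \<longrightarrow> f S = f (S - d ` {1..k})"
    and greedy: "\<forall>i' S j. pm_indep k P S \<and> j \<in> free_parts k P S \<longrightarrow>
                   m i' S j \<in> P j \<and>
                   (\<forall>u\<in>P j. f (insert u S) - f S \<le> f (insert (m i' S j) S) - f S)"
    and Opt_spec: "\<forall>S. pm_indep k P S \<longrightarrow>
                  Opt S \<subseteq> N - S \<and> pm_indep k P (S \<union> Opt S) \<and> card (Opt S) = k - card S \<and>
                  (\<forall>A. A \<subseteq> N - S \<and> pm_indep k P (S \<union> A) \<longrightarrow> f (S \<union> A) \<le> f (S \<union> Opt S))"
    and i_range: "1 \<le> i" "i \<le> T"
  shows "measure_pmf.expectation (srrg k P m i) (\<lambda>S. f (Opt S \<union> S))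
         \<ge> (1 - 2 / real k) * measure_pmf.expectation (srrg k P m (i - 1)) (\<lambda>S. f (Opt S \<union> S))
           + (1 / real k) * measure_pmf.expectation (srrg k P m (i - 1)) f"
proof -
  interpret srrg_setting N k P f Opt
  proof
    show "\<And>i j. i \<in> {1..k} \<Longrightarrow> j \<in> {1..k} \<Longrightarrow> i \<noteq> j \<Longrightarrow> P i \<inter> P j = {}"
      using parts_disj by blast
    show "\<And>S. S \<subseteq> N \<Longrightarrow> 0 \<le> f S" using nonneg by blast
    show "\<And>S. pm_indep k P S \<Longrightarrow> Opt S \<subseteq> N - S"
      and "\<And>S. pm_indep k P S \<Longrightarrow> pm_indep k P (S \<union> Opt S)"
      and "\<And>S. pm_indep k P S \<Longrightarrow> card (Opt S) = k - card S"
      and "\<And>S A. pm_indep k P S \<Longrightarrow> A \<subseteq> N - S \<Longrightarrow> pm_indep k P (S \<union> A) \<Longrightarrow>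
             f (S \<union> A) \<le> f (S \<union> Opt S)"
      using Opt_spec by blast+
  qed (fact finN submod parts_cover)+
  \<comment> \<open>Of the greedy rule only \<open>m i S j \<in> P j\<close> is needed, and the dummy elements matter only
    through \<open>card (Opt S) = k - card S\<close>, which \<open>Opt_spec\<close> provides directly.\<close>
  have greedy_in_part: "\<And>i S j. pm_indep k P S \<Longrightarrow> j \<in> free_parts k P S \<Longrightarrow> m i S j \<in> P j"
    using greedy by blast
  from expectation_srrg_step_ge[where i="i - 1", OF greedy_in_part k_pos] show ?thesis
    using i_range(1) unfolding completion_def by simp
qed

end
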